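(* Let $f:M\to M$ be a partially hyperbolic endomorphism of a closed manifold $M$, let $x\in M$, and let $E^c_f(x)$ and $F^c_f(x)$ be two center directions at $x$ (arising from possibly different orbits through $x$). Then $F^c_f(x)\subset E^c_f(x)\oplus E^s_f(x)$. In particular, the subspace $E^{cs}_f(x)=E^c_f(x)\oplus E^s_f(x)$ does not depend on the orbit through $x$.
   Context: A $C^1$ local diffeomorphism $f:M\to M$ is a partially hyperbolic endomorphism if there are a Riemannian metric and constants $0<\nu<\gamma_1\le\gamma_2<\mu$, $\nu<1<\mu$, $C>1$ such that for every orbit $(x_n)_{n\in\mathbb{Z}}$ ($f(x_n)=x_{n+1}$) there is a splitting $T_{x_n}M=E^s_f(x_n)\oplus E^c_f(x_n)\oplus E^u_f(x_n)$, $Df$-invariant along the orbit, with $\|Df^n_{x_i}v^s\|\le C\nu^n\|v^s\|$, $C^{-1}\gamma_1^n\|v^c\|\le\|Df^n_{x_i}v^c\|\le C\gamma_2^n\|v^c\|$, $C^{-1}\mu^n\|v^u\|\le\|Df^n_{x_i}v^u\|$ for all $n\ge0$, $i\in\mathbb{Z}$, $v^\ast\in E^\ast_f(x_i)$. A center direction at $x$ is $E^c_f(x_0)$ for some orbit with $x_0=x$. The stable subspace $E^s_f(x)$ is the same for all orbits through $x$. *)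

theory Defs
  imports "HOL-Analysis.Analysis"
begin

text \<open>Closed manifolds are modelled as compact embedded C^1 submanifolds of a
Euclidean space (Whitney embedding), described by slice charts.\<close>

definition C1_on :: "'a::euclidean_space set \<Rightarrow> ('a \<Rightarrow> 'b::euclidean_space) \<Rightarrow> bool" where
  "C1_on U \<phi> \<longleftrightarrow> (\<exists>D. (\<forall>z\<in>U. (\<phi> has_derivative blinfun_apply (D z)) (at z)) \<and> continuous_on U D)"

definition closed_C1_submanifold :: "'a::euclidean_space set \<Rightarrow> nat \<Rightarrow> bool" where
  "closed_C1_submanifold M d \<longleftrightarrow> compact M \<and>
     (\<forall>x\<in>M. \<exists>U V (\<phi>::'a \<Rightarrow> 'a) \<psi> S. open U \<and> x \<in> U \<and> open V \<and> homeomorphism U V \<phi> \<psi> \<and>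
        C1_on U \<phi> \<and> C1_on V \<psi> \<and> subspace S \<and> dim S = d \<and> \<phi> ` (M \<inter> U) = V \<inter> S)"

definition tangent_space :: "'a::euclidean_space set \<Rightarrow> 'a \<Rightarrow> 'a set" where
  "tangent_space M x = {v. \<exists>\<gamma> e. e > 0 \<and> (\<forall>t\<in>{-e<..<e}. \<gamma> t \<in> M) \<and> \<gamma> 0 = x \<and>
        (\<gamma> has_vector_derivative v) (at 0)}"

definition riemannian_metric :: "'a::euclidean_space set \<Rightarrow> ('a \<Rightarrow> 'a \<Rightarrow> 'a \<Rightarrow> real) \<Rightarrow> bool" where
  "riemannian_metric M g \<longleftrightarrow>
     (\<forall>x\<in>M. bilinear (g x) \<and> (\<forall>u v. g x u v = g x v u) \<and>
        (\<forall>v\<in>tangent_space M x. v \<noteq> 0 \<longrightarrow> g x v v > 0)) \<and>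
     continuous_on (M \<times> UNIV) (\<lambda>(x, u, v). g x u v)"

definition gnorm :: "('a::real_normed_vector \<Rightarrow> 'a \<Rightarrow> 'a \<Rightarrow> real) \<Rightarrow> 'a \<Rightarrow> 'a \<Rightarrow> real" where
  "gnorm g x v = sqrt (g x v v)"

definition is_orbit :: "'a set \<Rightarrow> ('a \<Rightarrow> 'a) \<Rightarrow> (int \<Rightarrow> 'a) \<Rightarrow> bool" where
  "is_orbit M f xs \<longleftrightarrow> (\<forall>i. xs i \<in> M \<and> f (xs i) = xs (i + 1))"

primrec Dfn :: "('a::real_normed_vector \<Rightarrow> 'a \<Rightarrow>\<^sub>L 'a) \<Rightarrow> (int \<Rightarrow> 'a) \<Rightarrow> int \<Rightarrow> nat \<Rightarrow> 'a \<Rightarrow> 'a" where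
  "Dfn Df xs i 0 v = v"
| "Dfn Df xs i (Suc n) v = blinfun_apply (Df (xs (i + int n))) (Dfn Df xs i n v)"

definition ph_splitting ::
  "'a::euclidean_space set \<Rightarrow> ('a \<Rightarrow> 'a \<Rightarrow>\<^sub>L 'a) \<Rightarrow> ('a \<Rightarrow> 'a \<Rightarrow> 'a \<Rightarrow> real) \<Rightarrow>
   real \<Rightarrow> real \<Rightarrow> real \<Rightarrow> real \<Rightarrow> real \<Rightarrow> (int \<Rightarrow> 'a) \<Rightarrow>
   (int \<Rightarrow> 'a set) \<Rightarrow> (int \<Rightarrow> 'a set) \<Rightarrow> (int \<Rightarrow> 'a set) \<Rightarrow> bool" where
  "ph_splitting M Df g \<nu> \<gamma>1 \<gamma>2 \<mu> C xs Es Ec Eu \<longleftrightarrow>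
     (\<forall>i. subspace (Es i) \<and> subspace (Ec i) \<and> subspace (Eu i) \<and>
        {a + b + c | a b c. a \<in> Es i \<and> b \<in> Ec i \<and> c \<in> Eu i} = tangent_space M (xs i) \<and>
        (\<forall>a\<in>Es i. \<forall>b\<in>Ec i. \<forall>c\<in>Eu i. a + b + c = 0 \<longrightarrow> a = 0 \<and> b = 0 \<and> c = 0) \<and>
        blinfun_apply (Df (xs i)) ` Es i = Es (i + 1) \<and>
        blinfun_apply (Df (xs i)) ` Ec i = Ec (i + 1) \<and>
        blinfun_apply (Df (xs i)) ` Eu i = Eu (i + 1) \<and>
        (\<forall>n. \<forall>v\<in>Es i. gnorm g (xs (i + int n)) (Dfn Df xs i n v) \<le> C * \<nu> ^ n * gnorm g (xs i) v) \<and>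
        (\<forall>n. \<forall>v\<in>Ec i. inverse C * \<gamma>1 ^ n * gnorm g (xs i) v \<le> gnorm g (xs (i + int n)) (Dfn Df xs i n v)
                       \<and> gnorm g (xs (i + int n)) (Dfn Df xs i n v) \<le> C * \<gamma>2 ^ n * gnorm g (xs i) v) \<and>
        (\<forall>n. \<forall>v\<in>Eu i. inverse C * \<mu> ^ n * gnorm g (xs i) v \<le> gnorm g (xs (i + int n)) (Dfn Df xs i n v)))"

text \<open>f : M -> M is a C^1 local diffeomorphism of the closed d-manifold M, Df is the
derivative of a C^1 extension of f to a neighbourhood of M, and f is partially
hyperbolic w.r.t. the Riemannian metric g and the constants nu, gamma1, gamma2, mu, C.\<close>
definition ph_endomorphism ::
  "'a::euclidean_space set \<Rightarrow> nat \<Rightarrow> ('a \<Rightarrow> 'a) \<Rightarrow> ('a \<Rightarrow> 'a \<Rightarrow>\<^sub>L 'a) \<Rightarrow>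
   ('a \<Rightarrow> 'a \<Rightarrow> 'a \<Rightarrow> real) \<Rightarrow> real \<Rightarrow> real \<Rightarrow> real \<Rightarrow> real \<Rightarrow> real \<Rightarrow> bool" where
  "ph_endomorphism M d f Df g \<nu> \<gamma>1 \<gamma>2 \<mu> C \<longleftrightarrow>
     closed_C1_submanifold M d \<and> f ` M \<subseteq> M \<and>
     (\<exists>U F. open U \<and> M \<subseteq> U \<and> (\<forall>x\<in>M. F x = f x) \<and>
        (\<forall>z\<in>U. (F has_derivative blinfun_apply (Df z)) (at z)) \<and> continuous_on U Df) \<and>
     (\<forall>x\<in>M. bij_betw (blinfun_apply (Df x)) (tangent_space M x) (tangent_space M (f x))) \<and>
     riemannian_metric M g \<and>
     0 < \<nu> \<and> \<nu> < \<gamma>1 \<and> \<gamma>1 \<le> \<gamma>2 \<and> \<gamma>2 < \<mu> \<and> \<nu> < 1 \<and> 1 < \<mu> \<and> 1 < C \<and>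
     (\<forall>xs. is_orbit M f xs \<longrightarrow> (\<exists>Es Ec Eu. ph_splitting M Df g \<nu> \<gamma>1 \<gamma>2 \<mu> C xs Es Ec Eu))"

end

theory Submission
  imports Defs
begin

text \<open>Along any orbit through x, the subspace E^c(x) + E^s(x) is exactly the set of tangent
vectors v at x whose forward iterates satisfy |Df^n v| <= K gamma2^n for some K: stable and
center vectors grow at most that fast, while a nonzero unstable component grows at least like
mu^n / C with mu > gamma2, and the other two components cannot compensate for it. This
characterisation only involves the forward orbit x, f x, f (f x), ..., which is common to all
orbits through x.\<close>

definition pos_def_on :: "'a::real_vector set \<Rightarrow> ('a \<Rightarrow> 'a \<Rightarrow> real) \<Rightarrow> bool" where
  "pos_def_on T B \<longleftrightarrow> subspace T \<and> bilinear B \<and> (\<forall>u v. B u v = B v u) \<and>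
     (\<forall>v\<in>T. v \<noteq> 0 \<longrightarrow> B v v > 0)"

lemma pos_def_on_nonneg:
  assumes "pos_def_on T B" "v \<in> T"
  shows "0 \<le> B v v"
proof (cases "v = 0")
  case True
  then show ?thesis
    using assms(1) bilinear_lzero[of B v] unfolding pos_def_on_def by simp
next
  case False
  then show ?thesis using assms unfolding pos_def_on_def by force
qed

lemma pos_def_on_cauchy_schwarz:
  assumes B: "pos_def_on T B" and "u \<in> T" "w \<in> T"
  shows "B u w \<le> sqrt (B u u) * sqrt (B w w)"
proof (cases "u = 0 \<or> w = 0")
  case True
  have "bilinear B" using B unfolding pos_def_on_def by blast
  with True show ?thesis by (auto simp: bilinear_lzero bilinear_rzero)
next
  case False
  have bil: "bilinear B" and sym: "B w u = B u w" and T: "subspace T"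
    using B unfolding pos_def_on_def by auto
  define s where "s = sqrt (B u u)"
  define t where "t = sqrt (B w w)"
  have "B u u > 0" "B w w > 0" using B False \<open>u \<in> T\<close> \<open>w \<in> T\<close> unfolding pos_def_on_def by auto
  then have st: "s > 0" "t > 0" "s\<^sup>2 = B u u" "t\<^sup>2 = B w w" unfolding s_def t_def by auto
  have "t *\<^sub>R u - s *\<^sub>R w \<in> T" using T \<open>u \<in> T\<close> \<open>w \<in> T\<close>
    by (intro subspace_diff subspace_scale)
  then have "0 \<le> B (t *\<^sub>R u - s *\<^sub>R w) (t *\<^sub>R u - s *\<^sub>R w)" by (rule pos_def_on_nonneg[OF B])
  also have "\<dots> = 2 * (s * t) * (s * t - B u w)"
    using sym by (simp add: st(3,4)[symmetric] bilinear_lsub[OF bil] bilinear_rsub[OF bil]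
        bilinear_lmul[OF bil] bilinear_rmul[OF bil] power2_eq_square algebra_simps)
  finally have "B u w \<le> s * t" using mult_pos_pos[OF st(1,2)] by (simp add: zero_le_mult_iff)
  then show ?thesis unfolding s_def t_def .
qed

lemma gnorm_nonneg:
  assumes "pos_def_on T (g x)" "v \<in> T"
  shows "0 \<le> gnorm g x v"
  using pos_def_on_nonneg[OF assms] unfolding gnorm_def by simp

lemma gnorm_eq_0_iff:
  assumes "pos_def_on T (g x)" "v \<in> T"
  shows "gnorm g x v = 0 \<longleftrightarrow> v = 0"
  using assms bilinear_lzero[of "g x" 0] unfolding pos_def_on_def gnorm_def by force

lemma gnorm_add_le:
  assumes B: "pos_def_on T (g x)" and "u \<in> T" "w \<in> T"
  shows "gnorm g x (u + w) \<le> gnorm g x u + gnorm g x w"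
proof -
  have bil: "bilinear (g x)" and sym: "g x w u = g x u w"
    using B unfolding pos_def_on_def by auto
  have "gnorm g x (u + w) = sqrt (g x u u + 2 * g x u w + g x w w)"
    using sym by (simp add: gnorm_def bilinear_ladd[OF bil] bilinear_radd[OF bil])
  also have "\<dots> \<le> sqrt ((gnorm g x u + gnorm g x w)\<^sup>2)"
    using pos_def_on_cauchy_schwarz[OF assms] pos_def_on_nonneg[OF B] assms
    by (simp add: gnorm_def power2_eq_square algebra_simps)
  also have "\<dots> = gnorm g x u + gnorm g x w"
    using gnorm_nonneg[of T g x] assms by simp
  finally show ?thesis .
qed

lemma gnorm_minus:
  assumes "bilinear (g x)"
  shows "gnorm g x (- v) = gnorm g x v"
  using assms by (simp add: gnorm_def bilinear_lneg bilinear_rneg)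

lemma gnorm_diff_le:
  assumes B: "pos_def_on T (g x)" and "u \<in> T" "w \<in> T"
  shows "gnorm g x (u - w) \<le> gnorm g x u + gnorm g x w"
proof -
  have "bilinear (g x)" "- w \<in> T" using assms unfolding pos_def_on_def by (auto intro: subspace_neg)
  then show ?thesis
    using gnorm_add_le[of T g x u "- w"] B \<open>u \<in> T\<close> by (simp add: gnorm_minus)
qed

lemma linear_Dfn: "linear (Dfn Df xs i n)"
proof (induction n)
  case 0
  have "Dfn Df xs i 0 = id" by auto
  then show ?case by (simp only: linear_id)
next
  case (Suc n)
  have step: "Dfn Df xs i (Suc n) = blinfun_apply (Df (xs (i + int n))) \<circ> Dfn Df xs i n" by auto
  show ?case
    unfolding step
    by (rule linear_compose[OF Suc.IH
          bounded_linear.linear[OF bounded_linear_blinfun_apply[OF bounded_linear_ident]]])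
qed

lemma Dfn_cong:
  assumes "\<And>k. k < n \<Longrightarrow> xs (i + int k) = ys (i + int k)"
  shows "Dfn Df xs i n v = Dfn Df ys i n v"
  using assms by (induction n) auto

lemma Dfn_mem:
  assumes "\<And>j. blinfun_apply (Df (xs j)) ` E j \<subseteq> E (j + 1)" and "v \<in> E i"
  shows "Dfn Df xs i n v \<in> E (i + int n)"
proof (induction n)
  case 0
  then show ?case using assms(2) by simp
next
  case (Suc n)
  then have "blinfun_apply (Df (xs (i + int n))) (Dfn Df xs i n v) \<in> E (i + int n + 1)"
    using assms(1) by blast
  then show ?case by (simp add: ac_simps)
qed

lemma is_orbit_forward_eq:
  assumes "is_orbit M f xs" "is_orbit M f ys" "xs i = ys i"
  shows "xs (i + int n) = ys (i + int n)"
proof (induction n)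
  case 0
  then show ?case using assms(3) by simp
next
  case (Suc n)
  then have "f (xs (i + int n)) = f (ys (i + int n))" by simp
  then show ?case using assms(1,2) unfolding is_orbit_def by (simp add: ac_simps)
qed

lemma subspace_sums3:
  assumes "subspace A" "subspace B" "subspace D"
  shows "subspace {a + b + c | a b c. a \<in> A \<and> b \<in> B \<and> c \<in> D}"
proof -
  have "subspace {x + c | x c. x \<in> {a + b | a b. a \<in> A \<and> b \<in> B} \<and> c \<in> D}"
    by (intro subspace_sums assms)
  moreover have "{x + c | x c. x \<in> {a + b | a b. a \<in> A \<and> b \<in> B} \<and> c \<in> D} =
      {a + b + c | a b c. a \<in> A \<and> b \<in> B \<and> c \<in> D}" by blast
  ultimately show ?thesis by metis
qed

lemma riemannian_metric_pos_def_on: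
  assumes "riemannian_metric M g" "x \<in> M" "subspace (tangent_space M x)"
  shows "pos_def_on (tangent_space M x) (g x)"
  using assms unfolding riemannian_metric_def pos_def_on_def by blast

lemma le_0_if_exponentially_dominated:
  fixes x K \<gamma> \<mu> :: real
  assumes "0 \<le> \<gamma>" "\<gamma> < \<mu>" and bound: "\<And>n. \<mu> ^ n * x \<le> K * \<gamma> ^ n"
  shows "x \<le> 0"
proof -
  have "\<mu> > 0" using assms(1,2) by linarith
  have "x \<le> K * (\<gamma> / \<mu>) ^ n" for n
    using bound[of n] \<open>\<mu> > 0\<close> by (simp add: power_divide mult.commute pos_le_divide_eq)
  moreover have "(\<lambda>n. K * (\<gamma> / \<mu>) ^ n) \<longlonglongrightarrow> K * 0"
    using assms(1,2) \<open>\<mu> > 0\<close> by (intro tendsto_intros) simp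
  ultimately show ?thesis
    by (intro LIMSEQ_le_const[where a = x]) auto
qed

definition bounded_growth_vectors ::
  "'a::euclidean_space set \<Rightarrow> ('a \<Rightarrow> 'a \<Rightarrow>\<^sub>L 'a) \<Rightarrow> ('a \<Rightarrow> 'a \<Rightarrow> 'a \<Rightarrow> real) \<Rightarrow> real \<Rightarrow>
   (int \<Rightarrow> 'a) \<Rightarrow> 'a set" where
  "bounded_growth_vectors M Df g \<gamma> xs = {v \<in> tangent_space M (xs 0).
     \<exists>K. \<forall>n. gnorm g (xs (int n)) (Dfn Df xs 0 n v) \<le> K * \<gamma> ^ n}"

lemma bounded_growth_vectors_orbit_cong:
  assumes "is_orbit M f xs" "is_orbit M f ys" "xs 0 = ys 0"
  shows "bounded_growth_vectors M Df g \<gamma> xs = bounded_growth_vectors M Df g \<gamma> ys"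
proof -
  have xs_ys: "xs (int n) = ys (int n)" for n
    using is_orbit_forward_eq[OF assms, of n] by simp
  then have "Dfn Df xs 0 n v = Dfn Df ys 0 n v" for n v
    by (intro Dfn_cong) simp
  then show ?thesis
    unfolding bounded_growth_vectors_def using xs_ys assms(3) by simp
qed

context
  fixes M Df g \<nu> \<gamma>1 \<gamma>2 \<mu> C xs Es Ec Eu
  assumes splitting: "ph_splitting M Df g \<nu> \<gamma>1 \<gamma>2 \<mu> C xs Es Ec Eu"
begin

lemmas ph_splitting_at = splitting[unfolded ph_splitting_def, THEN spec]

lemma ph_splitting_subspace:
  "subspace (Es i)" "subspace (Ec i)" "subspace (Eu i)" "subspace (tangent_space M (xs i))"
proof -
  show Es: "subspace (Es i)" and Ec: "subspace (Ec i)" and Eu: "subspace (Eu i)"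
    using ph_splitting_at[of i] by blast+
  have "{a + b + c | a b c. a \<in> Es i \<and> b \<in> Ec i \<and> c \<in> Eu i} = tangent_space M (xs i)"
    using ph_splitting_at[of i] by (elim conjE)
  then show "subspace (tangent_space M (xs i))" using subspace_sums3[OF Es Ec Eu] by simp
qed

lemma ph_splitting_tangent_space_eq:
  "tangent_space M (xs i) = {a + b + c | a b c. a \<in> Es i \<and> b \<in> Ec i \<and> c \<in> Eu i}"
  using ph_splitting_at[of i] by (elim conjE) (rule sym)

lemma ph_splitting_subset_tangent_space:
  "Es i \<subseteq> tangent_space M (xs i)" "Ec i \<subseteq> tangent_space M (xs i)"
  "Eu i \<subseteq> tangent_space M (xs i)"
proof -
  have "0 \<in> Es i" "0 \<in> Ec i" "0 \<in> Eu i" using ph_splitting_subspace(1-3) by (auto intro: subspace_0)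
  then show "Es i \<subseteq> tangent_space M (xs i)" "Ec i \<subseteq> tangent_space M (xs i)"
    "Eu i \<subseteq> tangent_space M (xs i)"
    unfolding ph_splitting_tangent_space_eq by force+
qed

lemma ph_splitting_Dfn_mem:
  "v \<in> Es i \<Longrightarrow> Dfn Df xs i n v \<in> Es (i + int n)"
  "v \<in> Ec i \<Longrightarrow> Dfn Df xs i n v \<in> Ec (i + int n)"
  "v \<in> Eu i \<Longrightarrow> Dfn Df xs i n v \<in> Eu (i + int n)"
proof -
  have inv: "blinfun_apply (Df (xs j)) ` Es j \<subseteq> Es (j + 1)"
    "blinfun_apply (Df (xs j)) ` Ec j \<subseteq> Ec (j + 1)"
    "blinfun_apply (Df (xs j)) ` Eu j \<subseteq> Eu (j + 1)" for j
    using ph_splitting_at[of j] by (elim conjE, simp)+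
  show "v \<in> Es i \<Longrightarrow> Dfn Df xs i n v \<in> Es (i + int n)"
    by (rule Dfn_mem[of Df xs Es, OF inv(1)])
  show "v \<in> Ec i \<Longrightarrow> Dfn Df xs i n v \<in> Ec (i + int n)"
    by (rule Dfn_mem[of Df xs Ec, OF inv(2)])
  show "v \<in> Eu i \<Longrightarrow> Dfn Df xs i n v \<in> Eu (i + int n)"
    by (rule Dfn_mem[of Df xs Eu, OF inv(3)])
qed

lemma ph_splitting_stable_bound:
  "v \<in> Es i \<Longrightarrow> gnorm g (xs (i + int n)) (Dfn Df xs i n v) \<le> C * \<nu> ^ n * gnorm g (xs i) v"
  using ph_splitting_at[of i] by blast

lemma ph_splitting_center_upper_bound:
  "v \<in> Ec i \<Longrightarrow> gnorm g (xs (i + int n)) (Dfn Df xs i n v) \<le> C * \<gamma>2 ^ n * gnorm g (xs i) v"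
  using ph_splitting_at[of i] by blast

lemma ph_splitting_unstable_lower_bound:
  "v \<in> Eu i \<Longrightarrow> inverse C * \<mu> ^ n * gnorm g (xs i) v \<le> gnorm g (xs (i + int n)) (Dfn Df xs i n v)"
  using ph_splitting_at[of i] by blast

lemma ph_splitting_pos_def_on:
  assumes "riemannian_metric M g" "is_orbit M f xs"
  shows "pos_def_on (tangent_space M (xs i)) (g (xs i))"
  using assms ph_splitting_subspace(4)
  by (auto simp: is_orbit_def intro: riemannian_metric_pos_def_on)

lemma center_stable_subset_bounded_growth_vectors:
  assumes "riemannian_metric M g" "is_orbit M f xs" "0 \<le> \<nu>" "\<nu> \<le> \<gamma>2" "0 \<le> C"
  shows "{a + b | a b. a \<in> Ec 0 \<and> b \<in> Es 0} \<subseteq> bounded_growth_vectors M Df g \<gamma>2 xs"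
proof
  fix v assume "v \<in> {a + b | a b. a \<in> Ec 0 \<and> b \<in> Es 0}"
  then obtain a b where v: "v = a + b" and a: "a \<in> Ec 0" and b: "b \<in> Es 0" by blast
  let ?T = "\<lambda>n::nat. tangent_space M (xs (int n))"
  let ?N = "\<lambda>n::nat. gnorm g (xs (int n))"
  let ?D = "\<lambda>n. Dfn Df xs 0 n"
  have pd: "pos_def_on (?T n) (g (xs (int n)))" for n
    using ph_splitting_pos_def_on[OF assms(1,2)] .
  have Da: "?D n a \<in> ?T n" and Db: "?D n b \<in> ?T n" for n
    using ph_splitting_Dfn_mem(2)[OF a, of n] ph_splitting_Dfn_mem(1)[OF b, of n]
      ph_splitting_subset_tangent_space[of "int n"]
    by auto
  have "b \<in> ?T 0" using b ph_splitting_subset_tangent_space(1)[of 0] by auto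
  then have nb: "0 \<le> ?N 0 b" using gnorm_nonneg[where g = g, OF pd[of 0]] by simp
  have "?N n (?D n v) \<le> (C * (?N 0 a + ?N 0 b)) * \<gamma>2 ^ n" for n
  proof -
    have "?N n (?D n v) \<le> ?N n (?D n a) + ?N n (?D n b)"
      using gnorm_add_le[where g = g, OF pd Da Db] v by (simp add: linear_add[OF linear_Dfn])
    also have "\<dots> \<le> C * \<gamma>2 ^ n * ?N 0 a + C * \<nu> ^ n * ?N 0 b"
      using ph_splitting_center_upper_bound[OF a, of n] ph_splitting_stable_bound[OF b, of n]
      by simp
    also have "\<dots> \<le> C * \<gamma>2 ^ n * ?N 0 a + C * \<gamma>2 ^ n * ?N 0 b"
      using assms(3-5) nb by (intro add_left_mono mult_right_mono mult_left_mono power_mono) auto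
    finally show ?thesis by (simp add: algebra_simps)
  qed
  moreover have "v \<in> ?T 0"
    using v a b ph_splitting_subset_tangent_space[of 0] ph_splitting_subspace(4)[of 0]
    by (auto intro: subspace_add)
  ultimately show "v \<in> bounded_growth_vectors M Df g \<gamma>2 xs"
    unfolding bounded_growth_vectors_def by auto
qed

lemma bounded_growth_vectors_subset_center_stable:
  assumes "riemannian_metric M g" "is_orbit M f xs"
    and "0 \<le> \<nu>" "\<nu> \<le> \<gamma>2" "\<gamma>2 < \<mu>" "0 < C"
  shows "bounded_growth_vectors M Df g \<gamma>2 xs \<subseteq> {a + b | a b. a \<in> Ec 0 \<and> b \<in> Es 0}"
proof
  fix v assume "v \<in> bounded_growth_vectors M Df g \<gamma>2 xs"
  then obtain K where "v \<in> tangent_space M (xs 0)"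
    and K: "\<And>n. gnorm g (xs (int n)) (Dfn Df xs 0 n v) \<le> K * \<gamma>2 ^ n"
    unfolding bounded_growth_vectors_def by blast
  then obtain a b c
    where v: "v = a + b + c" and a: "a \<in> Es 0" and b: "b \<in> Ec 0" and c: "c \<in> Eu 0"
    unfolding ph_splitting_tangent_space_eq by blast
  let ?T = "\<lambda>n::nat. tangent_space M (xs (int n))"
  let ?N = "\<lambda>n::nat. gnorm g (xs (int n))"
  let ?D = "\<lambda>n. Dfn Df xs 0 n"
  have pd: "pos_def_on (?T n) (g (xs (int n)))" for n
    using ph_splitting_pos_def_on[OF assms(1,2)] .
  have Da: "?D n a \<in> ?T n" and Db: "?D n b \<in> ?T n" and Dc: "?D n c \<in> ?T n" for n
    using ph_splitting_Dfn_mem(1)[OF a, of n] ph_splitting_Dfn_mem(2)[OF b, of n]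
      ph_splitting_Dfn_mem(3)[OF c, of n] ph_splitting_subset_tangent_space[of "int n"]
    by auto
  have Dv: "?D n v \<in> ?T n" for n
    using Da Db Dc ph_splitting_subspace(4) by (simp add: v linear_add[OF linear_Dfn] subspace_add)
  have "?N 0 a \<ge> 0" "?N 0 c \<ge> 0"
    using gnorm_nonneg[where g = g, OF pd[of 0]] Da[of 0] Dc[of 0] by simp_all
  have "\<mu> ^ n * ?N 0 c \<le> (C * (K + C * ?N 0 a + C * ?N 0 b)) * \<gamma>2 ^ n" for n
  proof -
    have "?D n c = (?D n v - ?D n a) - ?D n b"
      by (simp add: v linear_add[OF linear_Dfn])
    moreover have "?D n v - ?D n a \<in> ?T n"
      by (intro subspace_diff ph_splitting_subspace(4) Dv Da)
    ultimately have "?N n (?D n c) \<le> ?N n (?D n v - ?D n a) + ?N n (?D n b)"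
      using gnorm_diff_le[where g = g, OF pd _ Db] by simp
    also have "\<dots> \<le> ?N n (?D n v) + ?N n (?D n a) + ?N n (?D n b)"
      using gnorm_diff_le[where g = g, OF pd Dv Da] by simp
    also have "\<dots> \<le> K * \<gamma>2 ^ n + C * \<nu> ^ n * ?N 0 a + C * \<gamma>2 ^ n * ?N 0 b"
      using K[of n] ph_splitting_stable_bound[OF a, of n] ph_splitting_center_upper_bound[OF b, of n]
      by simp
    also have "\<dots> \<le> K * \<gamma>2 ^ n + C * \<gamma>2 ^ n * ?N 0 a + C * \<gamma>2 ^ n * ?N 0 b"
      using assms(3,4,6) \<open>?N 0 a \<ge> 0\<close>
      by (intro add_left_mono add_right_mono mult_right_mono mult_left_mono power_mono) auto
    finally have "inverse C * \<mu> ^ n * ?N 0 c \<le> (K + C * ?N 0 a + C * ?N 0 b) * \<gamma>2 ^ n"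
      using ph_splitting_unstable_lower_bound[OF c, of n] by (simp add: algebra_simps)
    then show ?thesis
      using assms(6) by (simp add: field_simps)
  qed
  then have "?N 0 c \<le> 0"
    using assms(3-5) by (intro le_0_if_exponentially_dominated) auto
  then have "c = 0"
    using gnorm_eq_0_iff[where g = g, OF pd[of 0]] Dc[of 0] \<open>?N 0 c \<ge> 0\<close> by simp
  then have "v = b + a" using v by (simp add: add.commute)
  then show "v \<in> {a + b | a b. a \<in> Ec 0 \<and> b \<in> Es 0}" using a b by blast
qed

lemma center_stable_eq_bounded_growth_vectors:
  assumes "riemannian_metric M g" "is_orbit M f xs"
    and "0 \<le> \<nu>" "\<nu> \<le> \<gamma>2" "\<gamma>2 < \<mu>" "0 < C"
  shows "{a + b | a b. a \<in> Ec 0 \<and> b \<in> Es 0} = bounded_growth_vectors M Df g \<gamma>2 xs"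
  using center_stable_subset_bounded_growth_vectors[OF assms(1-4)]
    bounded_growth_vectors_subset_center_stable[OF assms] assms(6)
  by (intro equalityI) auto

end

theorem mainTheorem8:
  fixes M :: "'a::euclidean_space set" and f :: "'a \<Rightarrow> 'a" and Df :: "'a \<Rightarrow> 'a \<Rightarrow>\<^sub>L 'a"
    and g :: "'a \<Rightarrow> 'a \<Rightarrow> 'a \<Rightarrow> real" and xs ys :: "int \<Rightarrow> 'a"
    and Es Ec Eu Fs Fc Fu :: "int \<Rightarrow> 'a set"
  assumes "ph_endomorphism M d f Df g \<nu> \<gamma>1 \<gamma>2 \<mu> C"
    and "p \<in> M"
    and "is_orbit M f xs" and "xs 0 = p" and "ph_splitting M Df g \<nu> \<gamma>1 \<gamma>2 \<mu> C xs Es Ec Eu"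
    and "is_orbit M f ys" and "ys 0 = p" and "ph_splitting M Df g \<nu> \<gamma>1 \<gamma>2 \<mu> C ys Fs Fc Fu"
  shows "Fc 0 \<subseteq> {a + b | a b. a \<in> Ec 0 \<and> b \<in> Es 0}
    \<and> {a + b | a b. a \<in> Ec 0 \<and> b \<in> Es 0} = {a + b | a b. a \<in> Fc 0 \<and> b \<in> Fs 0}"
proof -
  have metric: "riemannian_metric M g"
    and constants: "0 \<le> \<nu>" "\<nu> \<le> \<gamma>2" "\<gamma>2 < \<mu>" "0 < C"
    using assms(1) unfolding ph_endomorphism_def by auto
  have "{a + b | a b. a \<in> Ec 0 \<and> b \<in> Es 0} = bounded_growth_vectors M Df g \<gamma>2 xs"
    using center_stable_eq_bounded_growth_vectors[OF assms(5) metric assms(3) constants] .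
  also have "\<dots> = bounded_growth_vectors M Df g \<gamma>2 ys"
    using bounded_growth_vectors_orbit_cong[OF assms(3,6)] assms(4,7) by simp
  also have "\<dots> = {a + b | a b. a \<in> Fc 0 \<and> b \<in> Fs 0}"
    using center_stable_eq_bounded_growth_vectors[OF assms(8) metric assms(6) constants] by simp
  finally have "{a + b | a b. a \<in> Ec 0 \<and> b \<in> Es 0} =
      {a + b | a b. a \<in> Fc 0 \<and> b \<in> Fs 0}" .
  moreover have "Fc 0 \<subseteq> {a + b | a b. a \<in> Fc 0 \<and> b \<in> Fs 0}"
    using ph_splitting_subspace(1)[OF assms(8), of 0, THEN subspace_0] by force
  ultimately show ?thesis by simp
qed

end
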